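(* Consider the $v$-step controllable system described in the context, so that $(A+BK)^v=0$ with $v\ge 1$. Fix a time slot $k$ and condition on the realized sequence of scheduling actions and transmission outcomes $\{a_j,\delta_j,\gamma_j\}_{j<k}$. Assume that at least $v$ successful controller's transmissions occurred before slot $k$, and that at least one successful sensor's transmission occurred before slot $t^v_k$. Then the plant-state covariance $P_k=\mathbb{E}[x_kx_k^\top]$, where the expectation is over the disturbances, equals $$P_k=F(\phi^0_k)+\sum_{i=0}^{v-2} G\Big(\sum_{j=0}^{i}\phi^j_k-\sum_{j=0}^{i}\tau^{j+1}_k,\ \mathbb{1}(\phi^{i+1}_k>\tau^{i+1}_k)\big(F(\phi^{i+1}_k)-F(\tau^{i+1}_k)\big)\Big).$$ Here an empty sum is zero, so for $v=1$ the formula reads $P_k=F(\phi^0_k)$, and $$G(x,Y)=(A+BK)^xY\big((A+BK)^x\big)^\top .$$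
   Context: Time is discrete, $k=0,1,2,\dots$, and the plant evolves as $x_{k+1}=Ax_k+Bu_k+w_k$. Here $x_k\in\mathbb{R}^n$ and $u_k\in\mathbb{R}^m$, the matrices $A,B$ are constant, and $\{w_k\}$ is i.i.d. zero-mean Gaussian noise with positive definite covariance $R$, independent of the initial state. The spectral radius satisfies $\rho(A)>1$. In each slot $k$ a half-duplex controller chooses $a_k\in\{1,2\}$. If $a_k=1$, the sensor sends the exact state $x_k$ to the controller; if $a_k=2$, the controller sends a control packet to the actuator. Set $\delta_k=1$ iff $a_k=1$ and the sensor's transmission succeeds, and $\delta_k=0$ otherwise. Set $\gamma_k=1$ iff $a_k=2$ and the controller's transmission succeeds, and $\gamma_k=0$ otherwise. The controller's estimate is $\hat x_{k+1}=Ax_k+Bu_k$ if $a_k=1,\delta_k=1$, and $\hat x_{k+1}=A\hat x_k+Bu_k$ otherwise. The controller gain $K\in\mathbb{R}^{m\times n}$ satisfies $\rho(A+BK)<1$, and the prediction length is $v$. In slot $k$ the controller forms the command sequence $\mathcal{C}_k=[K\hat x_k,\,K(A+BK)\hat x_k,\dots,K(A+BK)^{v-1}\hat x_k]$. The actuator keeps a buffer $\mathcal{U}_k=[u^0_k,\dots,u^{v-1}_k]$. It sets $\mathcal{U}_k=\mathcal{C}_k$ if $a_k=2,\gamma_k=1$, and otherwise sets $\mathcal{U}_k=[u^1_{k-1},\dots,u^{v-1}_{k-1},0]$. The applied input is $u_k=u^0_k$. The plant is called $v$-step controllable if $(A+BK)^v=0$; for $v=1$ this means $A+BK=0$. Define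 $F(\tau)=\sum_{i=1}^{\tau}A^{i-1}R(A^\top)^{i-1}$ for $\tau\in\mathbb{N}$. The estimation-quality indicator is $\tau_k$, with $\tau_{k+1}=1$ if $a_k=1,\delta_k=1$ and $\tau_{k+1}=\tau_k+1$ otherwise. It counts the slots since the last successful sensor's transmission. For $i=1,\dots,v$, let $t^i_k$ be the time-slot index of the $i$-th most recent successful controller's transmission strictly before slot $k$; that is, $t^1_k>t^2_k>\dots$ are the slots $j<k$ with $a_j=2,\gamma_j=1$. The state parameters are defined as follows: - $\tau^0_k=\tau_k$, and $\tau^i_k=\tau_{t^i_k}$ for $i=1,\dots,v$. - $\eta^0_k=k-t^1_k$, and $\eta^i_k=t^i_k-t^{i+1}_k$ for $i=1,\dots,v-1$. - $\phi^i_k=\eta^i_k+\tau^{i+1}_k$ for $i=0,\dots,v-1$. *)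

theory Defs
  imports "HOL-Analysis.Analysis" "HOL-Probability.Probability"
begin

fun mpow :: "real^'n^'n \<Rightarrow> nat \<Rightarrow> real^'n^'n" where
  "mpow M 0 = mat 1"
| "mpow M (Suc k) = M ** mpow M k"

definition cmat :: "real^'n^'n \<Rightarrow> complex^'n^'n" where
  "cmat M = (\<chi> i j. complex_of_real (M $ i $ j))"

definition spectral_radius :: "real^'n^'n \<Rightarrow> real" where
  "spectral_radius M =
     Max ((\<lambda>l. cmod l) ` {l. \<exists>x. x \<noteq> 0 \<and> cmat M *v x = l *s x})"

definition pos_def :: "real^'n^'n \<Rightarrow> bool" where
  "pos_def R \<longleftrightarrow> transpose R = R \<and> (\<forall>x. x \<noteq> 0 \<longrightarrow> x \<bullet> (R *v x) > 0)"

text \<open>Zero-mean multivariate Gaussian with covariance R (Cramer-Wold characterisation: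
  every nontrivial linear functional is a centred normal with variance c'Rc).\<close>
definition centered_gaussian :: "'w measure \<Rightarrow> ('w \<Rightarrow> real^'n) \<Rightarrow> real^'n^'n \<Rightarrow> bool" where
  "centered_gaussian M X R \<longleftrightarrow> X \<in> borel_measurable M \<and>
     (\<forall>c. c \<noteq> 0 \<longrightarrow>
        distributed M lborel (\<lambda>\<omega>. c \<bullet> X \<omega>) (\<lambda>y. ennreal (normal_density 0 (sqrt (c \<bullet> (R *v c))) y)))"

definition outer :: "real^'n \<Rightarrow> real^'n^'n" where
  "outer x = (\<chi> i j. x $ i * x $ j)"

text \<open>Actions a k \<in> {1,2}; dl k = (a k = 1 and sensor transmission succeeds);
  gm k = (a k = 2 and controller transmission succeeds).
  sys ... k = (x_k, xhat_k, U_{k-1}) where U_{-1} = U0 is an arbitrary initial buffer.\<close>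

fun sys :: "real^'n^'n \<Rightarrow> real^'m^'n \<Rightarrow> real^'n^'m \<Rightarrow> nat \<Rightarrow>
    (nat \<Rightarrow> nat) \<Rightarrow> (nat \<Rightarrow> bool) \<Rightarrow> (nat \<Rightarrow> bool) \<Rightarrow>
    real^'n \<Rightarrow> real^'n \<Rightarrow> (nat \<Rightarrow> real^'m) \<Rightarrow> (nat \<Rightarrow> real^'n) \<Rightarrow> nat \<Rightarrow>
    (real^'n) \<times> (real^'n) \<times> (nat \<Rightarrow> real^'m)" where
  "sys A B K v a dl gm x0 xh0 U0 w 0 = (x0, xh0, U0)"
| "sys A B K v a dl gm x0 xh0 U0 w (Suc k) =
     (let (x, xh, Up) = sys A B K v a dl gm x0 xh0 U0 w k;
          U = (if a k = 2 \<and> gm k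
               then (\<lambda>i. if i < v then K *v (mpow (A + B ** K) i *v xh) else 0)
               else (\<lambda>i. if i + 1 < v then Up (i + 1) else 0));
          u = U 0
      in (A *v x + B *v u + w k,
          (if a k = 1 \<and> dl k then A *v x + B *v u else A *v xh + B *v u),
          U))"

definition state :: "real^'n^'n \<Rightarrow> real^'m^'n \<Rightarrow> real^'n^'m \<Rightarrow> nat \<Rightarrow>
    (nat \<Rightarrow> nat) \<Rightarrow> (nat \<Rightarrow> bool) \<Rightarrow> (nat \<Rightarrow> bool) \<Rightarrow>
    real^'n \<Rightarrow> real^'n \<Rightarrow> (nat \<Rightarrow> real^'m) \<Rightarrow> (nat \<Rightarrow> real^'n) \<Rightarrow> nat \<Rightarrow> real^'n" where
  "state A B K v a dl gm x0 xh0 U0 w k = fst (sys A B K v a dl gm x0 xh0 U0 w k)"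

text \<open>tau_0 = tau0 is an arbitrary (unspecified) initial value.\<close>
fun tau :: "(nat \<Rightarrow> nat) \<Rightarrow> (nat \<Rightarrow> bool) \<Rightarrow> nat \<Rightarrow> nat \<Rightarrow> nat" where
  "tau a dl tau0 0 = tau0"
| "tau a dl tau0 (Suc k) = (if a k = 1 \<and> dl k then 1 else tau a dl tau0 k + 1)"

definition ctrl_succ :: "(nat \<Rightarrow> nat) \<Rightarrow> (nat \<Rightarrow> bool) \<Rightarrow> nat \<Rightarrow> nat set" where
  "ctrl_succ a gm k = {j. j < k \<and> a j = 2 \<and> gm j}"

text \<open>t a gm k i = t^i_k, the i-th most recent (i \<ge> 1) successful controller slot before k.\<close>
definition tsl :: "(nat \<Rightarrow> nat) \<Rightarrow> (nat \<Rightarrow> bool) \<Rightarrow> nat \<Rightarrow> nat \<Rightarrow> nat" where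
  "tsl a gm k i = rev (sorted_list_of_set (ctrl_succ a gm k)) ! (i - 1)"

definition tau_par :: "(nat \<Rightarrow> nat) \<Rightarrow> (nat \<Rightarrow> bool) \<Rightarrow> (nat \<Rightarrow> bool) \<Rightarrow> nat \<Rightarrow> nat \<Rightarrow> nat \<Rightarrow> nat" where
  "tau_par a dl gm tau0 k i = (if i = 0 then tau a dl tau0 k else tau a dl tau0 (tsl a gm k i))"

definition eta_par :: "(nat \<Rightarrow> nat) \<Rightarrow> (nat \<Rightarrow> bool) \<Rightarrow> nat \<Rightarrow> nat \<Rightarrow> nat" where
  "eta_par a gm k i = (if i = 0 then k - tsl a gm k 1 else tsl a gm k i - tsl a gm k (i + 1))"

definition phi_par :: "(nat \<Rightarrow> nat) \<Rightarrow> (nat \<Rightarrow> bool) \<Rightarrow> (nat \<Rightarrow> bool) \<Rightarrow> nat \<Rightarrow> nat \<Rightarrow> nat \<Rightarrow> nat" where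
  "phi_par a dl gm tau0 k i = eta_par a gm k i + tau_par a dl gm tau0 k (i + 1)"

definition Fm :: "real^'n^'n \<Rightarrow> real^'n^'n \<Rightarrow> nat \<Rightarrow> real^'n^'n" where
  "Fm A R t = (\<Sum>i = 1..t. mpow A (i - 1) ** R ** transpose (mpow A (i - 1)))"

definition Gm :: "real^'n^'n \<Rightarrow> nat \<Rightarrow> real^'n^'n \<Rightarrow> real^'n^'n" where
  "Gm M x Y = mpow M x ** Y ** transpose (mpow M x)"

end

theory Submission
  imports Defs
begin

text \<open>Between two successful controller transmissions the actuator replays the commands predicted
  from the estimate, so the plant runs in closed loop with \<open>A + BK\<close>, driven by the estimation
  error at the transmission slot; that error is the noise accumulated since the last successful
  sensor transmission. Unrolling backwards over the last v controller transmissions, the term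
  still carrying the state at \<open>t\<^sup>v\<^sub>k\<close> is multiplied by a power of \<open>A + BK\<close> of
  exponent at least v and vanishes. What remains is a linear combination of disturbances whose
  time indices lie in the consecutive windows \<open>[t(i+1) - \<tau>(i+1), t(i) - \<tau>(i))\<close>, so
  each disturbance occurs at most once, and independence turns \<open>P\<^sub>k\<close> into the sum of
  the individual contributions \<open>C R C\<^sup>T\<close>.\<close>

lemma (in prob_space) centered_gaussian_inner_moments:
  fixes X :: "'a \<Rightarrow> real^'n"
  assumes X: "centered_gaussian M X R" and R: "pos_def R" and "c \<noteq> 0"
  shows "integrable M (\<lambda>\<omega>. c \<bullet> X \<omega>)" and "expectation (\<lambda>\<omega>. c \<bullet> X \<omega>) = 0"
    and "integrable M (\<lambda>\<omega>. (c \<bullet> X \<omega>)\<^sup>2)"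
    and "expectation (\<lambda>\<omega>. (c \<bullet> X \<omega>)\<^sup>2) = c \<bullet> (R *v c)"
proof -
  have var_pos: "c \<bullet> (R *v c) > 0" using R \<open>c \<noteq> 0\<close> by (simp add: pos_def_def)
  define s where "s = sqrt (c \<bullet> (R *v c))"
  have s: "s > 0" using var_pos by (simp add: s_def)
  have D: "distributed M lborel (\<lambda>\<omega>. c \<bullet> X \<omega>) (\<lambda>y. ennreal (normal_density 0 s y))"
    using X \<open>c \<noteq> 0\<close> by (simp add: centered_gaussian_def s_def)
  show "integrable M (\<lambda>\<omega>. c \<bullet> X \<omega>)"
    by (rule distributed_integrable_var[OF D]) (auto intro: integrable_normal_moment_nz_1[OF s])
  show mean: "expectation (\<lambda>\<omega>. c \<bullet> X \<omega>) = 0"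
    using normal_distributed_expectation[OF s D] by simp
  show "integrable M (\<lambda>\<omega>. (c \<bullet> X \<omega>)\<^sup>2)"
    using distributed_integrable[OF D, of "\<lambda>x. x\<^sup>2"] integrable_normal_moment[OF s, of 0 2] by simp
  show "expectation (\<lambda>\<omega>. (c \<bullet> X \<omega>)\<^sup>2) = c \<bullet> (R *v c)"
    using normal_distributed_variance[OF s D] mean var_pos by (simp add: s_def)
qed

lemma (in prob_space) centered_gaussian_component_moments:
  fixes X :: "'a \<Rightarrow> real^'n"
  assumes X: "centered_gaussian M X R" and R: "pos_def R"
  shows "integrable M (\<lambda>\<omega>. X \<omega> $ p)" and "expectation (\<lambda>\<omega>. X \<omega> $ p) = 0"
    and "integrable M (\<lambda>\<omega>. X \<omega> $ p * X \<omega> $ q)"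
    and "expectation (\<lambda>\<omega>. X \<omega> $ p * X \<omega> $ q) = R $ p $ q"
proof -
  have axis_nz: "axis i (1::real) \<noteq> 0" for i :: 'n
    by (simp add: axis_eq_0_iff)
  have R_axis: "(R *v axis j 1) $ i = R $ i $ j" for i j
    by (simp add: matrix_vector_mult_basis column_def)
  note diag = centered_gaussian_inner_moments[OF X R axis_nz, unfolded inner_axis' R_axis]
  show "integrable M (\<lambda>\<omega>. X \<omega> $ p)" "expectation (\<lambda>\<omega>. X \<omega> $ p) = 0"
    using diag by simp_all
  have R_sym: "R $ q $ p = R $ p $ q"
  proof -
    have "transpose R $ q $ p = R $ q $ p" using R by (simp add: pos_def_def)
    then show ?thesis by (simp add: transpose_def)
  qed
  have "integrable M (\<lambda>\<omega>. X \<omega> $ p * X \<omega> $ q) \<and>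
        expectation (\<lambda>\<omega>. X \<omega> $ p * X \<omega> $ q) = R $ p $ q"
  proof (cases "p = q")
    case True
    then show ?thesis using diag[of q] by (simp add: power2_eq_square)
  next
    case False
    define c where "c = axis p (1::real) + axis q 1"
    have "c $ p = 1" using False by (simp add: c_def axis_def)
    then have "c \<noteq> 0" by auto
    have cX: "c \<bullet> X \<omega> = X \<omega> $ p + X \<omega> $ q" for \<omega>
      by (simp add: c_def inner_add_left inner_axis')
    have cR: "c \<bullet> (R *v c) = R $ p $ p + R $ p $ q + R $ q $ p + R $ q $ q"
      by (simp add: c_def inner_add_left inner_axis' matrix_vector_right_distrib R_axis)
    note sum_sq = centered_gaussian_inner_moments(3,4)[OF X R \<open>c \<noteq> 0\<close>, unfolded cX cR]
    have polar: "X \<omega> $ p * X \<omega> $ q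
        = ((X \<omega> $ p + X \<omega> $ q)\<^sup>2 - (X \<omega> $ p)\<^sup>2 - (X \<omega> $ q)\<^sup>2) / 2" for \<omega>
      by (simp add: power2_eq_square algebra_simps)
    show ?thesis
      unfolding polar using sum_sq diag[of p] diag[of q] R_sym by simp
  qed
  then show "integrable M (\<lambda>\<omega>. X \<omega> $ p * X \<omega> $ q)"
    and "expectation (\<lambda>\<omega>. X \<omega> $ p * X \<omega> $ q) = R $ p $ q"
    by simp_all
qed

lemma (in prob_space) indep_vars_nth_mult:
  fixes X :: "'i \<Rightarrow> 'a \<Rightarrow> real^'n"
  assumes indep: "indep_vars (\<lambda>_. borel) X I" and "i \<in> I" "j \<in> I" "i \<noteq> j"
    and int_i: "integrable M (\<lambda>\<omega>. X i \<omega> $ p)" and int_j: "integrable M (\<lambda>\<omega>. X j \<omega> $ q)"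
  shows "integrable M (\<lambda>\<omega>. X i \<omega> $ p * X j \<omega> $ q)"
    and "expectation (\<lambda>\<omega>. X i \<omega> $ p * X j \<omega> $ q)
         = expectation (\<lambda>\<omega>. X i \<omega> $ p) * expectation (\<lambda>\<omega>. X j \<omega> $ q)"
proof -
  have restr: "indep_var (PiM {i} (\<lambda>_. borel)) (\<lambda>\<omega>. restrict (\<lambda>i. X i \<omega>) {i})
                         (PiM {j} (\<lambda>_. borel)) (\<lambda>\<omega>. restrict (\<lambda>i. X i \<omega>) {j})"
    using assms by (intro indep_var_restrict[OF indep]) auto
  have nth_meas: "(\<lambda>f. (f l :: real^'n) $ r) \<in> borel_measurable (PiM {l} (\<lambda>_. borel))" for l r
    by (rule measurable_compose[OF measurable_component_singleton])
      (auto intro: borel_measurable_continuous_onI continuous_intros)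
  have "indep_var borel (\<lambda>\<omega>. X i \<omega> $ p) borel (\<lambda>\<omega>. X j \<omega> $ q)"
    using indep_var_compose[OF restr nth_meas nth_meas] by (simp add: comp_def)
  then show "integrable M (\<lambda>\<omega>. X i \<omega> $ p * X j \<omega> $ q)"
    and "expectation (\<lambda>\<omega>. X i \<omega> $ p * X j \<omega> $ q)
         = expectation (\<lambda>\<omega>. X i \<omega> $ p) * expectation (\<lambda>\<omega>. X j \<omega> $ q)"
    using indep_var_integrable indep_var_lebesgue_integral int_i int_j by blast+
qed

lemma (in prob_space) indep_centered_gaussian_second_moments:
  fixes X :: "'i \<Rightarrow> 'a \<Rightarrow> real^'n"
  assumes indep: "indep_vars (\<lambda>_. borel) X I"
    and gauss: "\<And>i. i \<in> I \<Longrightarrow> centered_gaussian M (X i) R" and R: "pos_def R"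
    and "i \<in> I" "j \<in> I"
  shows "integrable M (\<lambda>\<omega>. X i \<omega> $ r * X j \<omega> $ s)"
    and "expectation (\<lambda>\<omega>. X i \<omega> $ r * X j \<omega> $ s) = (if i = j then R $ r $ s else 0)"
proof -
  note mom_i = centered_gaussian_component_moments[OF gauss[OF \<open>i \<in> I\<close>] R]
  note mom_j = centered_gaussian_component_moments[OF gauss[OF \<open>j \<in> I\<close>] R]
  show "integrable M (\<lambda>\<omega>. X i \<omega> $ r * X j \<omega> $ s)"
    "expectation (\<lambda>\<omega>. X i \<omega> $ r * X j \<omega> $ s) = (if i = j then R $ r $ s else 0)"
    using mom_i mom_j indep_vars_nth_mult[OF indep \<open>i \<in> I\<close> \<open>j \<in> I\<close>] by (cases "i = j"; simp)+
qed

lemma sum_scaleR_axis_axis: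
  "(\<Sum>p\<in>UNIV. \<Sum>q\<in>UNIV. c p q *\<^sub>R axis p (axis q (1::real))) = (\<chi> p q. c p q)"
proof -
  have sum_if: "(\<Sum>q\<in>UNIV. if P then f q else 0) = (if P then \<Sum>q\<in>UNIV. f q else (0::real))"
    for P f
    by simp
  show ?thesis
    by (simp add: vec_eq_iff axis_def if_distrib[of "\<lambda>v. v $ _"] if_distrib[of "(*) _"] sum_if
        cong: if_cong)
qed

lemma outer_eq_sum_axis:
  "outer x = (\<Sum>p\<in>UNIV. \<Sum>q\<in>UNIV. (x $ p * x $ q) *\<^sub>R axis p (axis q (1::real)))"
  by (simp add: sum_scaleR_axis_axis outer_def)

lemma (in prob_space) covariance_linear_combination:
  fixes X :: "'i \<Rightarrow> 'a \<Rightarrow> real^'n" and C :: "'j \<Rightarrow> real^'n^'k" and f :: "'j \<Rightarrow> 'i"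
  assumes indep: "indep_vars (\<lambda>_. borel) X I"
    and gauss: "\<And>i. i \<in> I \<Longrightarrow> centered_gaussian M (X i) R" and R: "pos_def R"
    and J: "finite J" "inj_on f J" "f ` J \<subseteq> I"
  shows "integrable M (\<lambda>\<omega>. outer (\<Sum>j\<in>J. C j *v X (f j) \<omega>))"
    and "expectation (\<lambda>\<omega>. outer (\<Sum>j\<in>J. C j *v X (f j) \<omega>))
         = (\<Sum>j\<in>J. C j ** R ** transpose (C j))"
proof -
  define Y where "Y \<omega> = (\<Sum>j\<in>J. C j *v X (f j) \<omega>)" for \<omega>
  have fJ: "f j \<in> I" if "j \<in> J" for j
    using J that by blast
  have mom: "integrable M (\<lambda>\<omega>. X (f j) \<omega> $ r * X (f j') \<omega> $ s)"
    "expectation (\<lambda>\<omega>. X (f j) \<omega> $ r * X (f j') \<omega> $ s) = (if j = j' then R $ r $ s else 0)"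
    if "j \<in> J" "j' \<in> J" for j j' r s
    using indep_centered_gaussian_second_moments[OF indep gauss R fJ[OF that(1)] fJ[OF that(2)]]
      J that
    by (auto simp: inj_on_eq_iff)
  have Y_nth: "Y \<omega> $ p = (\<Sum>j\<in>J. \<Sum>r\<in>UNIV. C j $ p $ r * X (f j) \<omega> $ r)" for \<omega> p
    by (simp add: Y_def matrix_vector_mult_def)
  have prod: "Y \<omega> $ p * Y \<omega> $ q = (\<Sum>j\<in>J. \<Sum>r\<in>UNIV. \<Sum>j'\<in>J. \<Sum>s\<in>UNIV.
        (C j $ p $ r * C j' $ q $ s) * (X (f j) \<omega> $ r * X (f j') \<omega> $ s))" for \<omega> p q
    unfolding Y_nth sum_product by (simp add: sum_distrib_left sum_distrib_right mult_ac)
      (rule sum.cong[OF refl], rule sum.swap)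
  have int: "integrable M (\<lambda>\<omega>. Y \<omega> $ p * Y \<omega> $ q)" for p q
    unfolding prod using mom by (intro Bochner_Integration.integrable_sum integrable_mult_right) auto
  have ex: "expectation (\<lambda>\<omega>. Y \<omega> $ p * Y \<omega> $ q)
      = (\<Sum>j\<in>J. C j ** R ** transpose (C j)) $ p $ q" for p q
  proof -
    have "expectation (\<lambda>\<omega>. Y \<omega> $ p * Y \<omega> $ q)
        = (\<Sum>j\<in>J. \<Sum>r\<in>UNIV. \<Sum>j'\<in>J. \<Sum>s\<in>UNIV.
             (C j $ p $ r * C j' $ q $ s) * (if j = j' then R $ r $ s else 0))"
      unfolding prod using mom by (simp add: Bochner_Integration.integrable_sum)
    also have "\<dots> = (\<Sum>j\<in>J. \<Sum>r\<in>UNIV. \<Sum>j'\<in>J.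
        if j' = j then \<Sum>s\<in>UNIV. C j $ p $ r * C j $ q $ s * R $ r $ s else 0)"
      by (intro sum.cong refl) auto
    also have "\<dots> = (\<Sum>j\<in>J. \<Sum>r\<in>UNIV. \<Sum>s\<in>UNIV. C j $ p $ r * C j $ q $ s * R $ r $ s)"
      using J by simp
    also have "\<dots> = (\<Sum>j\<in>J. C j ** R ** transpose (C j)) $ p $ q"
      by (simp add: matrix_matrix_mult_def transpose_def sum_distrib_left sum_distrib_right mult_ac)
        (rule sum.cong[OF refl], rule sum.swap)
    finally show ?thesis .
  qed
  have "integrable M (\<lambda>\<omega>. outer (Y \<omega>))"
    unfolding outer_eq_sum_axis
    using int by (intro Bochner_Integration.integrable_sum integrable_scaleR_left)
  then show "integrable M (\<lambda>\<omega>. outer (\<Sum>j\<in>J. C j *v X (f j) \<omega>))"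
    unfolding Y_def .
  have "expectation (\<lambda>\<omega>. outer (Y \<omega>))
      = (\<Sum>p\<in>UNIV. \<Sum>q\<in>UNIV. expectation (\<lambda>\<omega>. Y \<omega> $ p * Y \<omega> $ q) *\<^sub>R axis p (axis q 1))"
    unfolding outer_eq_sum_axis using int
    by (simp add: Bochner_Integration.integral_sum Bochner_Integration.integrable_sum)
  also have "\<dots> = (\<Sum>j\<in>J. C j ** R ** transpose (C j))"
    unfolding ex sum_scaleR_axis_axis by (simp add: vec_eq_iff)
  finally show "expectation (\<lambda>\<omega>. outer (\<Sum>j\<in>J. C j *v X (f j) \<omega>))
      = (\<Sum>j\<in>J. C j ** R ** transpose (C j))"
    unfolding Y_def .
qed

lemma mpow_add: "mpow M (i + j) = mpow M i ** mpow M j"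
  by (induction i) (simp_all add: matrix_mul_assoc)

lemma mpow_eq_0_mono: "mpow M v = 0 \<Longrightarrow> v \<le> n \<Longrightarrow> mpow M n = 0"
  using mpow_add[of M "n - v" v] by simp

lemma matrix_add_rdistrib: "((A::real^'n^'m) + B) ** C = A ** C + B ** C"
  by (simp add: matrix_matrix_mult_def vec_eq_iff sum.distrib algebra_simps)

lemma matrix_mul_sum: "(Z::real^'n^'m) ** (\<Sum>i\<in>I. Y i) = (\<Sum>i\<in>I. Z ** (Y i :: real^'k^'n))"
  by (induction I rule: infinite_finite_induct) (simp_all add: matrix_add_ldistrib)

lemma sum_matrix_mul: "(\<Sum>i\<in>I. Y i) ** (Z::real^'k^'n) = (\<Sum>i\<in>I. (Y i :: real^'n^'m) ** Z)"
  by (induction I rule: infinite_finite_induct) (simp_all add: matrix_add_rdistrib)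

lemma Fm_eq_sum_lessThan: "Fm A R t = (\<Sum>l<t. mpow A l ** R ** transpose (mpow A l))"
  by (induction t) (simp_all add: Fm_def)

lemma Fm_diff:
  assumes "\<tau> \<le> \<phi>"
  shows "Fm A R \<phi> - Fm A R \<tau> = (\<Sum>l\<in>{\<tau>..<\<phi>}. mpow A l ** R ** transpose (mpow A l))"
  using sum_diff_nat_ivl[OF le0 assms] by (simp add: Fm_eq_sum_lessThan atLeast0LessThan)

definition acc_noise :: "real^'n^'n \<Rightarrow> (nat \<Rightarrow> real^'n) \<Rightarrow> nat \<Rightarrow> nat \<Rightarrow> real^'n" where
  "acc_noise A w t \<tau> = (\<Sum>l<\<tau>. mpow A l *v w (t - 1 - l))"

lemma acc_noise_Suc: "acc_noise A w (Suc t) (Suc \<tau>) = A *v acc_noise A w t \<tau> + w t"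
proof -
  have "acc_noise A w (Suc t) (Suc \<tau>) = w t + (\<Sum>l<\<tau>. mpow A (Suc l) *v w (t - 1 - l))"
    unfolding acc_noise_def sum.lessThan_Suc_shift by simp
  then show ?thesis
    by (simp add: acc_noise_def linear_sum[OF matrix_vector_mul_linear] matrix_vector_mul_assoc)
qed

lemma acc_noise_diff:
  assumes "\<tau> \<le> \<phi>"
  shows "acc_noise A w t \<phi> - acc_noise A w t \<tau> = (\<Sum>l\<in>{\<tau>..<\<phi>}. mpow A l *v w (t - 1 - l))"
  using sum_diff_nat_ivl[OF le0 assms] by (simp add: acc_noise_def atLeast0LessThan)

context
  fixes A :: "real^'n^'n" and B :: "real^'m^'n" and K :: "real^'n^'m"
    and v :: nat and a :: "nat \<Rightarrow> nat" and dl gm :: "nat \<Rightarrow> bool"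
    and x0 xh0 :: "real^'n" and U0 :: "nat \<Rightarrow> real^'m" and w :: "nat \<Rightarrow> real^'n"
begin

abbreviation "plant j \<equiv> fst (sys A B K v a dl gm x0 xh0 U0 w j)"
abbreviation "estim j \<equiv> fst (snd (sys A B K v a dl gm x0 xh0 U0 w j))"
abbreviation "buf j \<equiv> snd (snd (sys A B K v a dl gm x0 xh0 U0 w j))"

lemma buf_Suc:
    "buf (Suc j) = (if a j = 2 \<and> gm j
       then (\<lambda>i. if i < v then K *v (mpow (A + B ** K) i *v estim j) else 0)
       else (\<lambda>i. if i + 1 < v then buf j (i + 1) else 0))"
  and plant_Suc: "plant (Suc j) = A *v plant j + B *v buf (Suc j) 0 + w j"
  and estim_Suc:
    "estim (Suc j) = (if a j = 1 \<and> dl j then A *v plant j else A *v estim j) + B *v buf (Suc j) 0"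
  by (simp_all add: Let_def split_beta)

declare sys.simps(2) [simp del]

lemma estimation_error_Suc:
  "plant (Suc j) - estim (Suc j)
     = (if a j = 1 \<and> dl j then w j else A *v (plant j - estim j) + w j)"
  unfolding plant_Suc estim_Suc by (simp add: matrix_vector_mult_diff_distrib)

lemma estimation_error_eq_acc_noise:
  "\<exists>s<j. a s = 1 \<and> dl s \<Longrightarrow> plant j - estim j = acc_noise A w j (tau a dl tau0 j)"
proof (induction j)
  case 0
  then show ?case by simp
next
  case (Suc j)
  show ?case
  proof (cases "a j = 1 \<and> dl j")
    case True
    then show ?thesis by (simp add: estimation_error_Suc acc_noise_def)
  next
    case False
    with Suc.prems have "\<exists>s<j. a s = 1 \<and> dl s" using less_Suc_eq by auto
    with Suc.IH show ?thesis
      unfolding estimation_error_Suc tau.simps if_not_P[OF False] by (simp add: acc_noise_Suc)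
  qed
qed

lemma buf_after_ctrl_success:
  assumes ctrl: "a t = 2 \<and> gm t"
    and no_ctrl: "\<And>s. t < s \<Longrightarrow> s \<le> t + d \<Longrightarrow> \<not> (a s = 2 \<and> gm s)"
  shows "buf (Suc (t + d))
         = (\<lambda>i. if i + d < v then K *v (mpow (A + B ** K) (i + d) *v estim t) else 0)"
  using no_ctrl
proof (induction d)
  case 0
  then show ?case using ctrl by (simp add: buf_Suc fun_eq_iff)
next
  case (Suc d)
  then have "\<not> (a (Suc (t + d)) = 2 \<and> gm (Suc (t + d)))" by auto
  then show ?case using Suc by (auto simp: buf_Suc[of "Suc (t + d)"] fun_eq_iff)
qed

lemma plant_after_ctrl_success:
  assumes vc: "mpow (A + B ** K) v = 0" and ctrl: "a t = 2 \<and> gm t"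
    and no_ctrl: "\<And>s. t < s \<Longrightarrow> s < t + d \<Longrightarrow> \<not> (a s = 2 \<and> gm s)"
    and err: "plant t - estim t = acc_noise A w t \<tau>"
  shows "plant (t + d) = mpow (A + B ** K) d *v estim t + acc_noise A w (t + d) (d + \<tau>)"
  using no_ctrl
proof (induction d)
  case 0
  then show ?case using err by (simp add: algebra_simps acc_noise_def)
next
  case (Suc d)
  \<comment> \<open>once the buffer has run empty (\<open>d \<ge> v\<close>) the prediction is 0 as well, by \<open>vc\<close>\<close>
  have input: "buf (Suc (t + d)) 0 = K *v (mpow (A + B ** K) d *v estim t)"
    using buf_after_ctrl_success[OF ctrl, of d] Suc.prems mpow_eq_0_mono[OF vc, of d]
    by (simp add: not_less)
  have IH: "plant (t + d) = mpow (A + B ** K) d *v estim t + acc_noise A w (t + d) (d + \<tau>)"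
    using Suc by simp
  have "plant (t + Suc d)
      = A *v plant (t + d) + B *v (K *v (mpow (A + B ** K) d *v estim t)) + w (t + d)"
    using plant_Suc[of "t + d"] input by simp
  also have "\<dots> = (A + B ** K) *v (mpow (A + B ** K) d *v estim t)
                    + (A *v acc_noise A w (t + d) (d + \<tau>) + w (t + d))"
    unfolding IH
    by (simp add: matrix_vector_right_distrib matrix_add_rdistrib matrix_vector_mult_add_rdistrib
        matrix_vector_mul_assoc matrix_mul_assoc)
  also have "\<dots> = mpow (A + B ** K) (Suc d) *v estim t + acc_noise A w (t + Suc d) (Suc d + \<tau>)"
    by (simp add: acc_noise_Suc matrix_vector_mul_assoc matrix_mul_assoc)
  finally show ?case .
qed

lemma plant_from_prev_ctrl_success:
  assumes vc: "mpow (A + B ** K) v = 0" and "t' < t" and ctrl: "a t' = 2 \<and> gm t'"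
    and no_ctrl: "\<And>s. t' < s \<Longrightarrow> s < t \<Longrightarrow> \<not> (a s = 2 \<and> gm s)"
    and sensor: "\<exists>j<t'. a j = 1 \<and> dl j"
  shows "plant t = mpow (A + B ** K) (t - t') *v (plant t' - acc_noise A w t' (tau a dl tau0 t'))
                   + acc_noise A w t (t - t' + tau a dl tau0 t')"
proof -
  note err = estimation_error_eq_acc_noise[OF sensor, of tau0]
  have "plant (t' + (t - t')) = mpow (A + B ** K) (t - t') *v estim t'
                                + acc_noise A w (t' + (t - t')) (t - t' + tau a dl tau0 t')"
    using \<open>t' < t\<close> by (intro plant_after_ctrl_success[OF vc ctrl _ err] no_ctrl) auto
  moreover have "estim t' = plant t' - acc_noise A w t' (tau a dl tau0 t')"
    using err by (simp add: algebra_simps)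
  ultimately show ?thesis using \<open>t' < t\<close> by simp
qed

lemma plant_unrolled:
  fixes T :: "nat \<Rightarrow> nat"
  assumes vc: "mpow (A + B ** K) v = 0"
    and dec: "\<And>i. i < v \<Longrightarrow> T (Suc i) < T i"
    and ctrl: "\<And>i. i < v \<Longrightarrow> a (T (Suc i)) = 2 \<and> gm (T (Suc i))"
    and no_ctrl: "\<And>i s. i < v \<Longrightarrow> T (Suc i) < s \<Longrightarrow> s < T i \<Longrightarrow> \<not> (a s = 2 \<and> gm s)"
    and sensor: "\<exists>j < T v. a j = 1 \<and> dl j"
  shows "plant (T 0) = (\<Sum>i<v. mpow (A + B ** K) (\<Sum>j<i. T j - T (Suc j)) *v
            (acc_noise A w (T i) (T i - T (Suc i) + tau a dl tau0 (T (Suc i)))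
             - acc_noise A w (T i) (if i = 0 then 0 else tau a dl tau0 (T i))))"
    (is "_ = (\<Sum>i<v. ?term i)")
proof -
  define delay where "delay i = (\<Sum>j<i. T j - T (Suc j))" for i
  define rest where "rest i = mpow (A + B ** K) (delay i) *v
      (plant (T i) - acc_noise A w (T i) (if i = 0 then 0 else tau a dl tau0 (T i)))" for i
  have rest_Suc: "rest i = ?term i + rest (Suc i)" if "i < v" for i
  proof -
    have "T v \<le> T (Suc i)"
      by (rule lift_Suc_antimono_le_ivl[of "{..<v}" T]) (use that dec in \<open>auto simp: less_imp_le\<close>)
    with sensor have "\<exists>j < T (Suc i). a j = 1 \<and> dl j" by (blast intro: less_le_trans)
    note step = plant_from_prev_ctrl_success[OF vc dec[OF that] ctrl[OF that] no_ctrl[OF that] this,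
        of tau0]
    have delay_Suc: "delay (Suc i) = delay i + (T i - T (Suc i))"
      by (simp add: delay_def)
    show ?thesis
      unfolding rest_def delay_Suc mpow_add delay_def[symmetric]
      by (simp add: step matrix_vector_right_distrib matrix_vector_mult_diff_distrib
          matrix_vector_mul_assoc)
  qed
  have unrolled: "plant (T 0) = (\<Sum>i<m. ?term i) + rest m" if "m \<le> v" for m
    using that
  proof (induction m)
    case 0
    then show ?case by (simp add: rest_def delay_def acc_noise_def)
  next
    case (Suc m)
    then show ?case using rest_Suc[of m] by (simp add: add.assoc)
  qed
  have "(\<Sum>j<v. 1) \<le> delay v"
    unfolding delay_def using dec by (intro sum_mono) (simp add: Suc_le_eq)
  then have "rest v = 0" by (simp add: rest_def mpow_eq_0_mono[OF vc])
  then show ?thesis using unrolled[of v] by simp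
qed

end

lemma tau_le_self: "\<exists>s<j. a s = 1 \<and> dl s \<Longrightarrow> tau a dl tau0 j \<le> j"
proof (induction j)
  case 0
  then show ?case by simp
next
  case (Suc j)
  then show ?case by (cases "\<exists>s<j. a s = 1 \<and> dl s") (auto simp: less_Suc_eq)
qed

lemma tau_add_le: "tau a dl tau0 (t + d) \<le> tau a dl tau0 t + d"
  by (induction d) auto

lemma finite_ctrl_succ: "finite (ctrl_succ a gm k)"
  unfolding ctrl_succ_def by (rule finite_subset[of _ "{..<k}"]) auto

lemma sorted_wrt_greater_nth_less_iff:
  fixes xs :: "'a::linorder list"
  assumes "sorted_wrt (>) xs" "i < length xs" "j < length xs"
  shows "xs ! i < xs ! j \<longleftrightarrow> j < i"
  using sorted_wrt_nth_less[OF assms(1), of i j] sorted_wrt_nth_less[OF assms(1), of j i] assms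
  by (cases i j rule: linorder_cases) auto

locale ctrl_schedule =
  fixes a :: "nat \<Rightarrow> nat" and dl gm :: "nat \<Rightarrow> bool" and tau0 k v :: nat
  assumes v_pos: "1 \<le> v"
    and enough_ctrl: "v \<le> card (ctrl_succ a gm k)"
    and sensor_before: "\<exists>j < tsl a gm k v. a j = 1 \<and> dl j"
begin

definition slot :: "nat \<Rightarrow> nat" where
  "slot i = (if i = 0 then k else tsl a gm k i)"

definition ctrl_slots :: "nat list" where
  "ctrl_slots = rev (sorted_list_of_set (ctrl_succ a gm k))"

lemma ctrl_slots:
  "set ctrl_slots = ctrl_succ a gm k" "length ctrl_slots = card (ctrl_succ a gm k)"
  "sorted_wrt (>) ctrl_slots"
  using finite_ctrl_succ by (simp_all add: ctrl_slots_def sorted_wrt_rev)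

lemma slot_0: "slot 0 = k"
  by (simp add: slot_def)

lemma slot_Suc: "slot (Suc i) = ctrl_slots ! i"
  by (simp add: slot_def tsl_def ctrl_slots_def)

lemma slot_Suc_in_ctrl_succ:
  assumes "i < v"
  shows "slot (Suc i) \<in> ctrl_succ a gm k"
proof -
  have "i < length ctrl_slots" using assms enough_ctrl ctrl_slots(2) by simp
  then have "ctrl_slots ! i \<in> set ctrl_slots" by (rule nth_mem)
  then show ?thesis by (simp add: slot_Suc ctrl_slots(1))
qed

lemma ctrl_success_at_slot: "i < v \<Longrightarrow> a (slot (Suc i)) = 2 \<and> gm (slot (Suc i))"
  using slot_Suc_in_ctrl_succ by (simp add: ctrl_succ_def)

lemma slot_Suc_less:
  assumes "i < v"
  shows "slot (Suc i) < slot i"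
proof (cases i)
  case 0
  then show ?thesis using slot_Suc_in_ctrl_succ[OF assms] by (simp add: ctrl_succ_def slot_0)
next
  case (Suc i')
  then show ?thesis
    using sorted_wrt_greater_nth_less_iff[OF ctrl_slots(3)] assms enough_ctrl ctrl_slots(2)
    by (simp add: slot_Suc)
qed

lemma slot_antimono: "i \<le> j \<Longrightarrow> j \<le> v \<Longrightarrow> slot j \<le> slot i"
  by (rule lift_Suc_antimono_le_ivl[of "{..<v}"]) (auto simp: less_imp_le slot_Suc_less)

lemma no_ctrl_success_between_slots:
  assumes "i < v" "slot (Suc i) < s" "s < slot i"
  shows "\<not> (a s = 2 \<and> gm s)"
proof
  assume ctrl: "a s = 2 \<and> gm s"
  have "s < k" using assms slot_antimono[of 0 i] by (simp add: slot_0)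
  with ctrl have "s \<in> set ctrl_slots" by (simp add: ctrl_slots(1) ctrl_succ_def)
  then obtain p where p: "p < length ctrl_slots" "ctrl_slots ! p = s"
    by (auto simp: in_set_conv_nth)
  note order = sorted_wrt_greater_nth_less_iff[OF ctrl_slots(3) _ p(1)]
  have "i < length ctrl_slots" using assms(1) enough_ctrl ctrl_slots(2) by simp
  then have "p < i" using order assms(2) p(2) by (simp add: slot_Suc)
  then obtain i' where "i = Suc i'" "p \<le> i'" by (cases i) auto
  then show False using order[of i'] assms(3) p \<open>i < length ctrl_slots\<close> by (simp add: slot_Suc)
qed

lemma sensor_success_before_slot: "1 \<le> i \<Longrightarrow> i \<le> v \<Longrightarrow> \<exists>j < slot i. a j = 1 \<and> dl j"
  using sensor_before slot_antimono[of i v] v_pos by (auto simp: slot_def intro: less_le_trans)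

definition age :: "nat \<Rightarrow> nat" where
  "age i = (if i = 0 then 0 else tau a dl tau0 (slot i))"

definition delay :: "nat \<Rightarrow> nat" where
  "delay i = (\<Sum>j<i. eta_par a gm k j)"

abbreviation phi :: "nat \<Rightarrow> nat" where
  "phi \<equiv> phi_par a dl gm tau0 k"

lemma eta_par_eq: "eta_par a gm k i = slot i - slot (Suc i)"
  by (simp add: eta_par_def slot_def)

lemma tau_par_Suc: "tau_par a dl gm tau0 k (Suc i) = age (Suc i)"
  by (simp add: tau_par_def age_def slot_def)

lemma phi_eq: "phi i = slot i - slot (Suc i) + age (Suc i)"
  by (simp add: phi_par_def eta_par_eq tau_par_Suc)

lemma age_le_slot: "i \<le> v \<Longrightarrow> age i \<le> slot i"
  using sensor_success_before_slot[of i] by (auto simp: age_def intro: tau_le_self)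

lemma age_le_phi:
  assumes "i < v"
  shows "age i \<le> phi i"
proof -
  have "tau a dl tau0 (slot i) \<le> tau a dl tau0 (slot (Suc i)) + (slot i - slot (Suc i))"
    using tau_add_le[of a dl tau0 "slot (Suc i)" "slot i - slot (Suc i)"] slot_Suc_less[OF assms]
    by simp
  then show ?thesis by (simp add: age_def phi_eq add.commute)
qed

lemma phi_le_slot: "i < v \<Longrightarrow> phi i \<le> slot i"
  using age_le_slot[of "Suc i"] slot_Suc_less[of i] by (simp add: phi_eq)

lemma phi_sum_minus_tau_sum:
  "(\<Sum>j = 0..i. phi j) - (\<Sum>j = 0..i. tau_par a dl gm tau0 k (j + 1)) = delay (Suc i)"
  by (simp add: phi_par_def sum.distrib delay_def atLeast0AtMost lessThan_Suc_atMost)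

text \<open>A pair \<open>(i, l)\<close> stands for the disturbance \<open>w (slot i - 1 - l)\<close>, which enters
  the i-th block of the unrolled state with gain \<open>A\<^sup>l\<close>.\<close>
definition noise_terms :: "(nat \<times> nat) set" where
  "noise_terms = Sigma {..<v} (\<lambda>i. {age i..<phi i})"

definition noise_time :: "nat \<times> nat \<Rightarrow> nat" where
  "noise_time = (\<lambda>(i, l). slot i - 1 - l)"

lemma finite_noise_terms: "finite noise_terms"
  by (simp add: noise_terms_def)

lemma sum_noise_terms: "(\<Sum>p\<in>noise_terms. h p) = (\<Sum>i<v. \<Sum>l\<in>{age i..<phi i}. h (i, l))"
  unfolding noise_terms_def by (subst sum.Sigma) auto

lemma noise_time_window:
  assumes "(i, l) \<in> noise_terms"
  shows "slot i - phi i \<le> noise_time (i, l)" and "noise_time (i, l) < slot i - age i"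
  using assms phi_le_slot[of i] by (auto simp: noise_terms_def noise_time_def)

text \<open>Consecutive blocks use adjacent windows of time indices, hence distinct disturbances.\<close>
lemma inj_on_noise_time: "inj_on noise_time noise_terms"
proof -
  define bound where "bound i = slot i - age i" for i
  have bound_Suc: "bound (Suc i) = slot i - phi i" if "i < v" for i
    using that age_le_slot[of "Suc i"] slot_Suc_less[of i] unfolding bound_def phi_eq by linarith
  have bound_Suc_le: "bound (Suc i) \<le> bound i" if "i < v" for i
  proof -
    have "bound (Suc i) = slot i - phi i" by (rule bound_Suc[OF that])
    also have "\<dots> \<le> slot i - age i" using age_le_phi[OF that] by (rule diff_le_mono2)
    finally show ?thesis by (simp add: bound_def)
  qed
  have bound_antimono: "bound j \<le> bound i" if "i \<le> j" "j \<le> v" for i j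
    by (rule lift_Suc_antimono_le_ivl[of "{..<v}" bound]) (use that bound_Suc_le in auto)
  have window: "bound (Suc i) \<le> noise_time (i, l) \<and> noise_time (i, l) < bound i"
    if "(i, l) \<in> noise_terms" for i l
  proof -
    have "i < v" using that by (simp add: noise_terms_def)
    then show ?thesis using noise_time_window[OF that] bound_Suc by (simp add: bound_def)
  qed
  have distinct_blocks: "noise_time (i', l') < noise_time (i, l)"
    if "(i, l) \<in> noise_terms" "(i', l') \<in> noise_terms" "i < i'" for i l i' l'
  proof -
    have "noise_time (i', l') < bound i'" using window[OF that(2)] by simp
    also have "\<dots> \<le> bound (Suc i)" using that by (intro bound_antimono) (auto simp: noise_terms_def)
    also have "\<dots> \<le> noise_time (i, l)" using window[OF that(1)] by simp
    finally show ?thesis .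
  qed
  show ?thesis
  proof (rule inj_onI, clarify)
    fix i l i' l'
    assume p: "(i, l) \<in> noise_terms" and q: "(i', l') \<in> noise_terms"
      and eq: "noise_time (i, l) = noise_time (i', l')"
    have "i = i'"
      using distinct_blocks[OF p q] distinct_blocks[OF q p] eq by (cases i i' rule: linorder_cases) auto
    moreover have "l = l'"
      using eq p q phi_le_slot[of i] \<open>i = i'\<close> by (auto simp: noise_time_def noise_terms_def)
    ultimately show "i = i' \<and> l = l'" ..
  qed
qed

definition noise_gain :: "real^'n^'n \<Rightarrow> real^'n^'n \<Rightarrow> nat \<times> nat \<Rightarrow> real^'n^'n" where
  "noise_gain M A = (\<lambda>(i, l). mpow M (delay i) ** mpow A l)"

lemma state_eq_noise_sum:
  fixes A :: "real^'n^'n" and B :: "real^'m^'n" and K :: "real^'n^'m"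
  assumes vc: "mpow (A + B ** K) v = 0"
  shows "state A B K v a dl gm x0 xh0 U0 w k
         = (\<Sum>p\<in>noise_terms. noise_gain (A + B ** K) A p *v w (noise_time p))"
proof -
  have "state A B K v a dl gm x0 xh0 U0 w k = (\<Sum>i<v. mpow (A + B ** K) (delay i) *v
          (acc_noise A w (slot i) (phi i) - acc_noise A w (slot i) (age i)))"
  proof -
    have "fst (sys A B K v a dl gm x0 xh0 U0 w (slot 0))
        = (\<Sum>i<v. mpow (A + B ** K) (\<Sum>j<i. slot j - slot (Suc j)) *v
            (acc_noise A w (slot i) (slot i - slot (Suc i) + tau a dl tau0 (slot (Suc i)))
             - acc_noise A w (slot i) (if i = 0 then 0 else tau a dl tau0 (slot i))))"
      by (rule plant_unrolled[OF vc slot_Suc_less ctrl_success_at_slot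
            no_ctrl_success_between_slots sensor_success_before_slot[OF v_pos order_refl]])
    then show ?thesis by (simp add: state_def slot_0 delay_def eta_par_eq phi_eq age_def)
  qed
  also have "\<dots> = (\<Sum>i<v. \<Sum>l\<in>{age i..<phi i}. noise_gain (A + B ** K) A (i, l) *v w (noise_time (i, l)))"
    by (intro sum.cong refl)
      (simp add: acc_noise_diff age_le_phi noise_gain_def noise_time_def
        linear_sum[OF matrix_vector_mul_linear] matrix_vector_mul_assoc)
  also have "\<dots> = (\<Sum>p\<in>noise_terms. noise_gain (A + B ** K) A p *v w (noise_time p))"
    by (simp add: sum_noise_terms)
  finally show ?thesis .
qed

lemma noise_gain_covariance_blocks:
  "(\<Sum>p\<in>noise_terms. noise_gain M A p ** R ** transpose (noise_gain M A p))
   = (\<Sum>i<v. Gm M (delay i) (Fm A R (phi i) - Fm A R (age i)))"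
proof -
  have "(\<Sum>l\<in>{age i..<phi i}. noise_gain M A (i, l) ** R ** transpose (noise_gain M A (i, l)))
        = Gm M (delay i) (Fm A R (phi i) - Fm A R (age i))" if "i < v" for i
    using that
    by (simp add: Fm_diff age_le_phi Gm_def noise_gain_def matrix_mul_sum sum_matrix_mul
        matrix_transpose_mul matrix_mul_assoc)
  then show ?thesis by (simp add: sum_noise_terms)
qed

lemma noise_gain_covariance:
  "(\<Sum>p\<in>noise_terms. noise_gain M A p ** R ** transpose (noise_gain M A p))
   = Fm A R (phi 0)
     + (\<Sum>i = 0..<v - 1.
          Gm M ((\<Sum>j = 0..i. phi j) - (\<Sum>j = 0..i. tau_par a dl gm tau0 k (j + 1)))
             (if phi (i + 1) > tau_par a dl gm tau0 k (i + 1)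
              then Fm A R (phi (i + 1)) - Fm A R (tau_par a dl gm tau0 k (i + 1))
              else 0))"
proof -
  obtain v' where v': "v = Suc v'" using v_pos by (cases v) auto
  have block_0: "Gm M (delay 0) (Fm A R (phi 0) - Fm A R (age 0)) = Fm A R (phi 0)"
    by (simp add: Gm_def delay_def age_def Fm_def)
  have block_Suc: "Gm M (delay (Suc i)) (Fm A R (phi (Suc i)) - Fm A R (age (Suc i)))
      = Gm M ((\<Sum>j = 0..i. phi j) - (\<Sum>j = 0..i. tau_par a dl gm tau0 k (j + 1)))
             (if phi (i + 1) > tau_par a dl gm tau0 k (i + 1)
              then Fm A R (phi (i + 1)) - Fm A R (tau_par a dl gm tau0 k (i + 1))
              else 0)" if "i < v'" for i
    unfolding phi_sum_minus_tau_sum using age_le_phi[of "Suc i"] that v' by (simp add: tau_par_Suc)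
  have "(\<Sum>i<v. Gm M (delay i) (Fm A R (phi i) - Fm A R (age i)))
      = Fm A R (phi 0) + (\<Sum>i<v'. Gm M (delay (Suc i)) (Fm A R (phi (Suc i)) - Fm A R (age (Suc i))))"
    unfolding v' sum.lessThan_Suc_shift block_0 ..
  then show ?thesis
    unfolding noise_gain_covariance_blocks by (simp add: v' atLeast0LessThan block_Suc)
qed

end

theorem proposition1:
  fixes M :: "'w measure"
    and A :: "real^'n^'n" and B :: "real^'m^'n" and K :: "real^'n^'m"
    and R :: "real^'n^'n"
    and w :: "nat \<Rightarrow> 'w \<Rightarrow> real^'n" and x0 :: "'w \<Rightarrow> real^'n"
    and xh0 :: "real^'n" and U0 :: "nat \<Rightarrow> real^'m"
    and v :: nat and a :: "nat \<Rightarrow> nat" and dl gm :: "nat \<Rightarrow> bool"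
    and tau0 :: nat and k :: nat
  assumes prob: "prob_space M"
    and gauss: "\<And>j. centered_gaussian M (w j) R"
    and Rpd: "pos_def R"
    and indep: "prob_space.indep_vars M (\<lambda>_. borel)
                  (\<lambda>i. case i of None \<Rightarrow> x0 | Some j \<Rightarrow> w j) UNIV"
    and rhoA: "spectral_radius A > 1"
    and rhoK: "spectral_radius (A + B ** K) < 1"
    and v1: "v \<ge> 1"
    and vctrl: "mpow (A + B ** K) v = 0"
    and act: "\<And>j. a j \<in> {1, 2}"
    and dl_a: "\<And>j. dl j \<Longrightarrow> a j = 1"
    and gm_a: "\<And>j. gm j \<Longrightarrow> a j = 2"
    and enough_ctrl: "card (ctrl_succ a gm k) \<ge> v"
    and sensor_before: "\<exists>j < tsl a gm k v. a j = 1 \<and> dl j"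
  shows "integrable M (\<lambda>\<omega>. outer (state A B K v a dl gm (x0 \<omega>) xh0 U0 (\<lambda>j. w j \<omega>) k)) \<and>
         integral\<^sup>L M (\<lambda>\<omega>. outer (state A B K v a dl gm (x0 \<omega>) xh0 U0 (\<lambda>j. w j \<omega>) k))
         = Fm A R (phi_par a dl gm tau0 k 0)
           + (\<Sum>i = 0..<v - 1.
               Gm (A + B ** K)
                  ((\<Sum>j = 0..i. phi_par a dl gm tau0 k j) - (\<Sum>j = 0..i. tau_par a dl gm tau0 k (j + 1)))
                  (if phi_par a dl gm tau0 k (i + 1) > tau_par a dl gm tau0 k (i + 1)
                   then Fm A R (phi_par a dl gm tau0 k (i + 1)) - Fm A R (tau_par a dl gm tau0 k (i + 1))
                   else 0))"
proof -
  interpret prob_space M by (rule prob)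
  interpret ctrl_schedule a dl gm tau0 k v
    using v1 enough_ctrl sensor_before by unfold_locales
  let ?X = "\<lambda>i. case i of None \<Rightarrow> x0 | Some j \<Rightarrow> w j"
  let ?C = "noise_gain (A + B ** K) A"
  have plant_k: "state A B K v a dl gm (x0 \<omega>) xh0 U0 (\<lambda>j. w j \<omega>) k
      = (\<Sum>p\<in>noise_terms. ?C p *v ?X (Some (noise_time p)) \<omega>)" for \<omega>
    using state_eq_noise_sum[OF vctrl] by simp
  have noise_indep: "indep_vars (\<lambda>_. borel) ?X (range Some)"
    using indep by (rule indep_vars_subset) simp
  have noise_gauss: "i \<in> range Some \<Longrightarrow> centered_gaussian M (?X i) R" for i
    using gauss by auto
  have "inj_on (\<lambda>p. Some (noise_time p)) noise_terms"
    using inj_on_noise_time by (simp add: inj_on_def)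
  note cov = covariance_linear_combination[OF noise_indep noise_gauss Rpd finite_noise_terms this, of ?C]
  show ?thesis
    unfolding plant_k noise_gain_covariance[symmetric] using cov by auto
qed

end
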